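(* For any compilation chain for partial programs and any trace relation ${\sim}\subseteq\mathit{Trace}_S\times\mathit{Trace}_T$ with existential and universal images $\tilde\tau,\tilde\sigma$, the following are equivalent: (i) $\mathit{RSP}^{\tilde\tau}$: for every source partial program $P$ and every $\pi_S\subseteq\mathit{Trace}_S$, $P\models_R\pi_S$ implies $P{\downarrow}\models_R(\mathit{Safe}\circ\tilde\tau)(\pi_S)$; (ii) $\mathit{RSC}^{\sim}$: for every $P$, every target context $C_T$, every target trace $t$ and every finite prefix $m\le t$, if $C_T[P{\downarrow}]\rightsquigarrow t$ then there exist a source context $C_S$, a target trace $t'\ge m$ and a source trace $s\sim t'$ with $C_S[P]\rightsquigarrow s$; (iii) $\mathit{RSP}^{\tilde\sigma}$: for every $P$ and every target safety property $\pi_T$, $P\models_R\tilde\sigma(\pi_T)$ implies $P{\downarrow}\models_R\pi_T$.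
   Context: A compilation chain for partial programs consists of source partial programs $P$ and source contexts $C_S$, target partial programs and target contexts $C_T$, linking $C[P]$ into whole programs, sets $\mathit{Trace}_S,\mathit{Trace}_T$ of traces, semantics relations $W\rightsquigarrow t$ for whole programs, and a compiler $P\mapsto P{\downarrow}$. Traces are finite or infinite sequences of events; $m\le t$ means $m$ is a finite prefix of $t$ (and $t'\ge m$ means $m\le t'$). $P\models_R\pi$ iff for every context $C$ at the same level and every $t$, $C[P]\rightsquigarrow t$ implies $t\in\pi$. A target property $\pi$ is a safety property iff for every $t\notin\pi$ there is $m\le t$ such that every $t'$ with $m\le t'$ satisfies $t'\notin\pi$. $\mathit{Safe}(\pi)$ is the intersection of all target safety properties containing $\pi$. The existential image of $\sim$ is $\tilde\tau(\pi)=\{t\mid\exists s.\ s\sim t\wedge s\in\pi\}$ and its universal image is $\tilde\sigma(\pi)=\{s\mid\forall t.\ s\sim t\Rightarrow t\in\pi\}$. *)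

theory Defs
  imports Main "HOL-Library.Sublist"
begin

datatype 'e trace = Fin "'e list" | Inf "nat \<Rightarrow> 'e"

fun tprefix :: "'e list \<Rightarrow> 'e trace \<Rightarrow> bool" where
  "tprefix m (Fin l) = prefix m l"
| "tprefix m (Inf f) = (m = map f [0..<length m])"

definition safety :: "'e trace set \<Rightarrow> bool" where
  "safety \<pi> \<longleftrightarrow> (\<forall>t. t \<notin> \<pi> \<longrightarrow> (\<exists>m. tprefix m t \<and> (\<forall>t'. tprefix m t' \<longrightarrow> t' \<notin> \<pi>)))"

definition Safe :: "'e trace set \<Rightarrow> 'e trace set" where
  "Safe \<pi> = \<Inter> {S. safety S \<and> \<pi> \<subseteq> S}"

definition tau_img :: "('s \<Rightarrow> 't \<Rightarrow> bool) \<Rightarrow> 's set \<Rightarrow> 't set" where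
  "tau_img rel \<pi> = {t. \<exists>s. rel s t \<and> s \<in> \<pi>}"

definition sigma_img :: "('s \<Rightarrow> 't \<Rightarrow> bool) \<Rightarrow> 't set \<Rightarrow> 's set" where
  "sigma_img rel \<pi> = {s. \<forall>t. rel s t \<longrightarrow> t \<in> \<pi>}"

definition rsat :: "('c \<Rightarrow> 'p \<Rightarrow> 'w) \<Rightarrow> ('w \<Rightarrow> 'tr \<Rightarrow> bool) \<Rightarrow> 'p \<Rightarrow> 'tr set \<Rightarrow> bool" where
  "rsat link sem P \<pi> \<longleftrightarrow> (\<forall>C t. sem (link C P) t \<longrightarrow> t \<in> \<pi>)"

end

theory Submission
  imports Defs
begin

text \<open>All three criteria say the same thing: for every source program P, the target behaviours
  of the compiled program lie in Safe of the existential image of the source behaviours of P.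
  For (i) this holds because Safe composed with the existential image is monotone and the source
  behaviours are the strongest property that P robustly satisfies; for (ii) because Safe \<pi> consists
  of the traces each of whose finite prefixes extends to a trace of \<pi>; for (iii) because the
  existential and universal images form a Galois connection and Safe \<pi> is the least safety
  property containing \<pi>.\<close>

lemma tau_img_subset_iff: "tau_img rel A \<subseteq> B \<longleftrightarrow> A \<subseteq> sigma_img rel B"
  unfolding tau_img_def sigma_img_def by blast

lemma tau_img_mono: "A \<subseteq> B \<Longrightarrow> tau_img rel A \<subseteq> tau_img rel B"
  unfolding tau_img_def by blast

lemma Safe_least: "safety S \<Longrightarrow> \<pi> \<subseteq> S \<Longrightarrow> Safe \<pi> \<subseteq> S"
  unfolding Safe_def by blast

lemma subset_Safe_iff: "X \<subseteq> Safe \<pi> \<longleftrightarrow> (\<forall>S. safety S \<longrightarrow> \<pi> \<subseteq> S \<longrightarrow> X \<subseteq> S)"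
  unfolding Safe_def by blast

lemma Safe_mono: "\<pi> \<subseteq> \<pi>' \<Longrightarrow> Safe \<pi> \<subseteq> Safe \<pi>'"
  unfolding Safe_def by blast

lemma safety_prefix_extensible:
  "safety {t. \<forall>m. tprefix m t \<longrightarrow> (\<exists>t'. tprefix m t' \<and> t' \<in> \<pi>)}"
  unfolding safety_def by blast

lemma mem_Safe_iff: "t \<in> Safe \<pi> \<longleftrightarrow> (\<forall>m. tprefix m t \<longrightarrow> (\<exists>t'. tprefix m t' \<and> t' \<in> \<pi>))"
proof
  assume "t \<in> Safe \<pi>"
  moreover have "Safe \<pi> \<subseteq> {t. \<forall>m. tprefix m t \<longrightarrow> (\<exists>t'. tprefix m t' \<and> t' \<in> \<pi>)}"
    by (rule Safe_least[OF safety_prefix_extensible]) blast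
  ultimately show "\<forall>m. tprefix m t \<longrightarrow> (\<exists>t'. tprefix m t' \<and> t' \<in> \<pi>)"
    by blast
next
  assume "\<forall>m. tprefix m t \<longrightarrow> (\<exists>t'. tprefix m t' \<and> t' \<in> \<pi>)"
  then show "t \<in> Safe \<pi>"
    unfolding Safe_def safety_def by blast
qed

definition behaviours :: "('c \<Rightarrow> 'p \<Rightarrow> 'w) \<Rightarrow> ('w \<Rightarrow> 'tr \<Rightarrow> bool) \<Rightarrow> 'p \<Rightarrow> 'tr set" where
  "behaviours link sem P = {t. \<exists>C. sem (link C P) t}"

lemma rsat_iff_behaviours_subset: "rsat link sem P \<pi> \<longleftrightarrow> behaviours link sem P \<subseteq> \<pi>"
  unfolding rsat_def behaviours_def by blast

lemma rsat_preservation_iff_behaviours_subset: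
  assumes "mono F"
  shows "(\<forall>P \<pi>. rsat linkS semS P \<pi> \<longrightarrow> rsat linkT semT (compile P) (F \<pi>))
    \<longleftrightarrow> (\<forall>P. behaviours linkT semT (compile P) \<subseteq> F (behaviours linkS semS P))"
  using assms unfolding rsat_iff_behaviours_subset mono_def by blast

lemma rsp_tau_iff_behaviours_subset:
  "(\<forall>P \<pi>S. rsat linkS semS P \<pi>S \<longrightarrow> rsat linkT semT (compile P) (Safe (tau_img rel \<pi>S)))
    \<longleftrightarrow> (\<forall>P. behaviours linkT semT (compile P) \<subseteq> Safe (tau_img rel (behaviours linkS semS P)))"
  by (rule rsat_preservation_iff_behaviours_subset) (simp add: mono_def Safe_mono tau_img_mono)

lemma rsc_iff_behaviours_subset:
  "(\<forall>P CT t m. tprefix m t \<longrightarrow> semT (linkT CT (compile P)) t \<longrightarrow>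
      (\<exists>CS t' s. tprefix m t' \<and> rel s t' \<and> semS (linkS CS P) s))
    \<longleftrightarrow> (\<forall>P. behaviours linkT semT (compile P) \<subseteq> Safe (tau_img rel (behaviours linkS semS P)))"
  unfolding subset_iff mem_Safe_iff behaviours_def tau_img_def by blast

lemma rsp_sigma_iff_behaviours_subset:
  "(\<forall>P \<pi>T. safety \<pi>T \<longrightarrow> rsat linkS semS P (sigma_img rel \<pi>T) \<longrightarrow> rsat linkT semT (compile P) \<pi>T)
    \<longleftrightarrow> (\<forall>P. behaviours linkT semT (compile P) \<subseteq> Safe (tau_img rel (behaviours linkS semS P)))"
  unfolding rsat_iff_behaviours_subset subset_Safe_iff tau_img_subset_iff by blast

theorem theorem5p2:
  fixes linkS :: "'cs \<Rightarrow> 'ps \<Rightarrow> 'ws"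
    and semS :: "'ws \<Rightarrow> 'es trace \<Rightarrow> bool"
    and linkT :: "'ct \<Rightarrow> 'pt \<Rightarrow> 'wt"
    and semT :: "'wt \<Rightarrow> 'et trace \<Rightarrow> bool"
    and comp :: "'ps \<Rightarrow> 'pt"
    and rel :: "'es trace \<Rightarrow> 'et trace \<Rightarrow> bool"
  shows "((\<forall>P \<pi>S. rsat linkS semS P \<pi>S \<longrightarrow> rsat linkT semT (comp P) (Safe (tau_img rel \<pi>S)))
          \<longleftrightarrow>
          (\<forall>P CT t m. tprefix m t \<longrightarrow> semT (linkT CT (comp P)) t \<longrightarrow>
             (\<exists>CS t' s. tprefix m t' \<and> rel s t' \<and> semS (linkS CS P) s)))
       \<and>
         ((\<forall>P CT t m. tprefix m t \<longrightarrow> semT (linkT CT (comp P)) t \<longrightarrow>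
             (\<exists>CS t' s. tprefix m t' \<and> rel s t' \<and> semS (linkS CS P) s))
          \<longleftrightarrow>
          (\<forall>P \<pi>T. safety \<pi>T \<longrightarrow> rsat linkS semS P (sigma_img rel \<pi>T) \<longrightarrow> rsat linkT semT (comp P) \<pi>T))"
  unfolding rsp_tau_iff_behaviours_subset rsc_iff_behaviours_subset rsp_sigma_iff_behaviours_subset
  by (rule conjI refl)+

end
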